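(* Let $T$ be any finite rooted tree and let $T_{in}$ be its internal subtree. Then there exist a Bayesian network and an elimination order whose elimination tree $T'$ satisfies $T'_{in}\cong T_{in}$ (isomorphic as rooted directed trees).
   Context: Trees are directed with edges pointing toward the root. The internal subtree $T_{in}$ of a tree $T$ is the subgraph induced by its non-leaf nodes. A Bayesian network is a directed acyclic graph on a finite set of variables, each variable $x$ carrying a factor (conditional probability table) whose scope is $\{x\}\cup\mathrm{parents}(x)$. Given a total order $\sigma$ of the variables, the elimination graph is built as follows: create one leaf node for each factor of the network; maintain a current collection of factors (initially the network's factors), each attached to a node; process variables in the order $\sigma$, and when processing $x$, let $F$ be the set of current factors whose scope contains $x$, create a new node labelled $x$ with a directed edge from the node of each factor in $F$ to the new node, remove $F$ from the collection, and add a new factor attached to the new node with scope equal to the union of the scopes of $F$ minus $\{x\}$. When this graph is a tree it is called the elimination tree. *)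

theory Defs
  imports Main
begin

definition rooted_tree :: "'n set \<Rightarrow> ('n \<times> 'n) set \<Rightarrow> bool" where
  "rooted_tree V E \<longleftrightarrow> finite V \<and> E \<subseteq> V \<times> V \<and>
     (\<exists>r\<in>V. (\<forall>v. (r, v) \<notin> E) \<and>
             (\<forall>v\<in>V. v \<noteq> r \<longrightarrow> (\<exists>!w. (v, w) \<in> E)) \<and>
             (\<forall>v\<in>V. (v, r) \<in> E\<^sup>*))"

definition internal_nodes :: "'n set \<Rightarrow> ('n \<times> 'n) set \<Rightarrow> 'n set" where
  "internal_nodes V E = {v \<in> V. \<exists>u. (u, v) \<in> E}"

definition internal_edges :: "'n set \<Rightarrow> ('n \<times> 'n) set \<Rightarrow> ('n \<times> 'n) set" where
  "internal_edges V E = E \<inter> (internal_nodes V E \<times> internal_nodes V E)"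

definition digraph_iso :: "'a set \<Rightarrow> ('a \<times> 'a) set \<Rightarrow> 'b set \<Rightarrow> ('b \<times> 'b) set \<Rightarrow> bool" where
  "digraph_iso V1 E1 V2 E2 \<longleftrightarrow> E1 \<subseteq> V1 \<times> V1 \<and> E2 \<subseteq> V2 \<times> V2 \<and>
     (\<exists>f. bij_betw f V1 V2 \<and> (\<forall>u\<in>V1. \<forall>v\<in>V1. (u, v) \<in> E1 \<longleftrightarrow> (f u, f v) \<in> E2))"

definition bayes_net :: "'v set \<Rightarrow> ('v \<Rightarrow> 'v set) \<Rightarrow> bool" where
  "bayes_net X pa \<longleftrightarrow> finite X \<and> (\<forall>x\<in>X. pa x \<subseteq> X) \<and>
     acyclic {(p, x). x \<in> X \<and> p \<in> pa x}"

definition elim_order :: "'v set \<Rightarrow> 'v list \<Rightarrow> bool" where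
  "elim_order X \<sigma> \<longleftrightarrow> distinct \<sigma> \<and> set \<sigma> = X"

text \<open>Nodes of the elimination graph: one leaf per factor of the network (the factor
  of variable x), and one node per eliminated variable.\<close>

datatype 'v enode = Leaf 'v | Elim 'v

text \<open>The current factor collection is a set of pairs (attached node, scope);
  the second component accumulates the edges.\<close>

definition elim_step :: "'v \<Rightarrow> ('v enode \<times> 'v set) set \<times> ('v enode \<times> 'v enode) set
    \<Rightarrow> ('v enode \<times> 'v set) set \<times> ('v enode \<times> 'v enode) set" where
  "elim_step x = (\<lambda>(C, E).
     let F = {c \<in> C. x \<in> snd c}
     in ((C - F) \<union> {(Elim x, (\<Union>c\<in>F. snd c) - {x})},
         E \<union> {(fst c, Elim x) | c. c \<in> F}))"

definition init_factors :: "'v set \<Rightarrow> ('v \<Rightarrow> 'v set) \<Rightarrow> ('v enode \<times> 'v set) set" where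
  "init_factors X pa = {(Leaf x, insert x (pa x)) | x. x \<in> X}"

definition elim_nodes :: "'v set \<Rightarrow> 'v list \<Rightarrow> 'v enode set" where
  "elim_nodes X \<sigma> = Leaf ` X \<union> Elim ` set \<sigma>"

definition elim_edges :: "'v set \<Rightarrow> ('v \<Rightarrow> 'v set) \<Rightarrow> 'v list \<Rightarrow> ('v enode \<times> 'v enode) set" where
  "elim_edges X pa \<sigma> = snd (fold elim_step \<sigma> (init_factors X pa, {}))"

end

theory Submission
  imports Defs
begin

(*
  Number the vertices of a rooted tree 0, ..., n - 1 so that every child comes before its parent,
  and take the Bayesian network on these numbers in which the parents of i are the number of the
  parent of vertex i in the tree, so that every variable has at most one parent.  Eliminating
  0, 1, ..., n - 1 in this order, the factors containing k are the factor of k itself and the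
  factors produced by eliminating the children of k, each of scope {k}; the factor produced by
  eliminating k has scope pa k.  Hence the elimination graph is the tree with one new leaf
  (the factor of the variable) hanging below every vertex, and its internal subtree is the tree
  itself.  The theorem follows by applying this to the internal subtree of T, which is again a
  rooted tree as soon as T has an edge.
*)

lemma digraph_iso_pullback:
  assumes "bij_betw f V W" and "E \<subseteq> W \<times> W"
  shows "digraph_iso V {(u, v) \<in> V \<times> V. (f u, f v) \<in> E} W E"
  using assms unfolding digraph_iso_def by blast

lemma digraph_iso_trans:
  assumes "digraph_iso V1 E1 V2 E2" and "digraph_iso V2 E2 V3 E3"
  shows "digraph_iso V1 E1 V3 E3"
proof -
  obtain f where f: "bij_betw f V1 V2" and f_edges: "\<forall>u\<in>V1. \<forall>v\<in>V1. (u, v) \<in> E1 \<longleftrightarrow> (f u, f v) \<in> E2"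
    using assms(1) unfolding digraph_iso_def by blast
  obtain g where g: "bij_betw g V2 V3" and g_edges: "\<forall>u\<in>V2. \<forall>v\<in>V2. (u, v) \<in> E2 \<longleftrightarrow> (g u, g v) \<in> E3"
    using assms(2) unfolding digraph_iso_def by blast
  have "\<forall>u\<in>V1. \<forall>v\<in>V1. (u, v) \<in> E1 \<longleftrightarrow> ((g \<circ> f) u, (g \<circ> f) v) \<in> E3"
    using f_edges g_edges bij_betw_apply[OF f] by simp
  with bij_betw_trans[OF f g] assms show ?thesis
    unfolding digraph_iso_def by blast
qed

lemma rooted_tree_single_valued:
  assumes "rooted_tree V E"
  shows "single_valued E"
proof (rule single_valuedI)
  fix x y z assume xy: "(x, y) \<in> E" and xz: "(x, z) \<in> E"
  from assms obtain r where "E \<subseteq> V \<times> V" and sink: "\<forall>v. (r, v) \<notin> E"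
    and parent: "\<forall>v\<in>V. v \<noteq> r \<longrightarrow> (\<exists>!w. (v, w) \<in> E)"
    unfolding rooted_tree_def by blast
  with xy have "x \<in> V" "x \<noteq> r"
    by auto
  with parent have "\<exists>!w. (x, w) \<in> E"
    by blast
  with xy xz show "y = z"
    by blast
qed

lemma single_valued_cycle_returns:
  assumes "single_valued E" and cycle: "(c, c) \<in> E\<^sup>+"
  shows "(c, y) \<in> E\<^sup>* \<Longrightarrow> (y, c) \<in> E\<^sup>*"
proof (induction rule: rtrancl_induct)
  case base
  show ?case by simp
next
  case (step y z)
  have "(y, c) \<in> E\<^sup>+"
    using step.IH cycle by (cases "y = c") (auto simp: rtrancl_eq_or_trancl)
  then obtain w where "(y, w) \<in> E" "(w, c) \<in> E\<^sup>*"
    by (meson tranclD)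
  with step.hyps(2) \<open>single_valued E\<close> show ?case
    by (metis single_valuedD)
qed

lemma rooted_tree_acyclic:
  assumes "rooted_tree V E"
  shows "acyclic E"
proof (rule acyclicI, intro allI notI)
  fix c assume cycle: "(c, c) \<in> E\<^sup>+"
  from assms obtain r where EV: "E \<subseteq> V \<times> V" and sink: "\<forall>v. (r, v) \<notin> E"
    and reach: "\<forall>v\<in>V. (v, r) \<in> E\<^sup>*"
    unfolding rooted_tree_def by blast
  have "c \<in> V"
    using cycle EV by (meson SigmaD1 subsetD tranclD)
  then have "(r, c) \<in> E\<^sup>*"
    using single_valued_cycle_returns[OF rooted_tree_single_valued[OF assms] cycle] reach by blast
  then have "(r, c) \<in> E\<^sup>+"
    using cycle by (rule rtrancl_trancl_trancl)
  then show False
    using sink by (meson tranclD)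
qed

lemma rooted_tree_internal:
  assumes "rooted_tree V E" and "E \<noteq> {}"
  shows "rooted_tree (internal_nodes V E) (internal_edges V E)"
proof -
  from assms(1) obtain r where finite: "finite V" and EV: "E \<subseteq> V \<times> V" and "r \<in> V"
    and sink: "\<forall>v. (r, v) \<notin> E" and parent: "\<forall>v\<in>V. v \<noteq> r \<longrightarrow> (\<exists>!w. (v, w) \<in> E)"
    and reach: "\<forall>v\<in>V. (v, r) \<in> E\<^sup>*"
    unfolding rooted_tree_def by blast
  let ?Vi = "internal_nodes V E" and ?Ei = "internal_edges V E"
  have target_internal: "(u, v) \<in> E \<Longrightarrow> v \<in> ?Vi" for u v
    using EV unfolding internal_nodes_def by blast
  have edge_internal: "(u, v) \<in> E \<Longrightarrow> u \<in> ?Vi \<Longrightarrow> (u, v) \<in> ?Ei" for u v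
    using target_internal unfolding internal_edges_def by blast
  have "r \<in> ?Vi"
  proof -
    obtain u v where uv: "(u, v) \<in> E"
      using assms(2) by auto
    then have "(v, r) \<in> E\<^sup>*"
      using EV reach by blast
    then show ?thesis
      by (cases rule: rtranclE) (use uv target_internal in blast)+
  qed
  moreover have "(v, r) \<in> ?Ei\<^sup>*" if "v \<in> ?Vi" for v
  proof -
    have "(v, r) \<in> E\<^sup>*"
      using that reach unfolding internal_nodes_def by blast
    then show ?thesis
      using that
    proof (induction rule: converse_rtrancl_induct)
      case (step y z)
      then have "(y, z) \<in> ?Ei" "z \<in> ?Vi"
        using target_internal edge_internal by blast+
      then show ?case
        using step.IH by (meson converse_rtrancl_into_rtrancl)
    qed simp
  qed
  moreover have "\<exists>!w. (v, w) \<in> ?Ei" if v: "v \<in> ?Vi" "v \<noteq> r" for v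
  proof -
    obtain w where "(v, w) \<in> E" and unique: "\<And>w'. (v, w') \<in> E \<Longrightarrow> w' = w"
      using parent v unfolding internal_nodes_def by blast
    then show ?thesis
      using edge_internal[OF _ v(1)] unfolding internal_edges_def by blast
  qed
  moreover have "finite ?Vi" "?Ei \<subseteq> ?Vi \<times> ?Vi" "\<forall>v. (r, v) \<notin> ?Ei"
    using finite sink unfolding internal_nodes_def internal_edges_def by auto
  ultimately show ?thesis
    unfolding rooted_tree_def by (intro conjI bexI[of _ r]) auto
qed

lemma finite_acyclic_has_sink:
  assumes "finite A" "A \<noteq> {}" "acyclic R"
  obtains s where "s \<in> A" "\<And>y. y \<in> A \<Longrightarrow> (s, y) \<notin> R"
proof -
  have "wf ((R \<inter> A \<times> A)\<inverse>)"
    using assms by (intro finite_acyclic_wf_converse) (auto intro: acyclic_subset)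
  moreover obtain a where "a \<in> A"
    using assms(2) by blast
  ultimately obtain s where "s \<in> A" and min: "\<And>y. (y, s) \<in> (R \<inter> A \<times> A)\<inverse> \<Longrightarrow> y \<notin> A"
    by (rule wfE_min) blast
  then show ?thesis
    using that by blast
qed

lemma finite_acyclic_topological_list:
  assumes "finite A" and "acyclic R"
  obtains \<tau> where "distinct \<tau>" "set \<tau> = A"
    "\<And>i j. i < length \<tau> \<Longrightarrow> j < length \<tau> \<Longrightarrow> (\<tau> ! i, \<tau> ! j) \<in> R \<Longrightarrow> i < j"
proof -
  have "\<exists>\<tau>. distinct \<tau> \<and> set \<tau> = A \<and>
      (\<forall>i<length \<tau>. \<forall>j<length \<tau>. (\<tau> ! i, \<tau> ! j) \<in> R \<longrightarrow> i < j)"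
    using assms(1)
  proof (induction A rule: finite_remove_induct)
    case empty
    show ?case by simp
  next
    case (remove A)
    obtain s where "s \<in> A" and sink: "\<And>y. y \<in> A \<Longrightarrow> (s, y) \<notin> R"
      using finite_acyclic_has_sink[OF remove.hyps(1,2) assms(2)] by blast
    then obtain \<tau> where \<tau>: "distinct \<tau>" "set \<tau> = A - {s}"
      "\<forall>i<length \<tau>. \<forall>j<length \<tau>. (\<tau> ! i, \<tau> ! j) \<in> R \<longrightarrow> i < j"
      using remove.IH by blast
    have "i < j"
      if "i < Suc (length \<tau>)" "j < Suc (length \<tau>)" "((\<tau> @ [s]) ! i, (\<tau> @ [s]) ! j) \<in> R" for i j
    proof (cases "i < length \<tau> \<and> j < length \<tau>")
      case True
      then show ?thesis using that(3) \<tau>(3) by (simp add: nth_append)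
    next
      case False
      have "(\<tau> @ [s]) ! j \<in> A"
        using that(2) \<tau>(2) \<open>s \<in> A\<close> nth_mem[of j \<tau>]
        by (cases "j < length \<tau>") (auto simp: nth_append)
      then show ?thesis
        using False that sink by (auto simp: nth_append less_Suc_eq)
    qed
    with \<tau>(1,2) \<open>s \<in> A\<close> show ?case
      by (intro exI[of _ "\<tau> @ [s]"]) auto
  qed
  with that show ?thesis by blast
qed

fun enode_var :: "'v enode \<Rightarrow> 'v" where
  "enode_var (Leaf x) = x"
| "enode_var (Elim x) = x"

lemma bij_betw_enode_var_Elim: "bij_betw enode_var (Elim ` A) A"
  by (auto simp: bij_betw_def inj_on_def image_image)

locale ordered_forest_net =
  fixes n :: nat and pa :: "nat \<Rightarrow> nat set"
  assumes pa_greater: "i < n \<Longrightarrow> j \<in> pa i \<Longrightarrow> i < j \<and> j < n"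
    and pa_unique: "i < n \<Longrightarrow> j \<in> pa i \<Longrightarrow> j' \<in> pa i \<Longrightarrow> j = j'"
begin

lemma bayes_net_upt: "bayes_net {0..<n} pa"
proof -
  have "acyclic {(p, x). x \<in> {0..<n} \<and> p \<in> pa x}"
    by (rule acyclicI_order[where f = id]) (auto dest: pa_greater)
  then show ?thesis
    unfolding bayes_net_def by (auto dest: pa_greater)
qed

(* The collection after eliminating 0, ..., k - 1: the factor produced by eliminating x has
   scope pa x and survives until the parent of x is eliminated (for ever if x has no parent). *)
definition factors_after :: "nat \<Rightarrow> (nat enode \<times> nat set) set" where
  "factors_after k = {(Leaf x, insert x (pa x)) | x. k \<le> x \<and> x < n} \<union>
     {(Elim x, pa x) | x. x < k \<and> (\<forall>p\<in>pa x. k \<le> p)}"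

definition edges_after :: "nat \<Rightarrow> (nat enode \<times> nat enode) set" where
  "edges_after k =
     {(Leaf x, Elim x) | x. x < k} \<union> {(Elim c, Elim p) | c p. c < k \<and> p \<in> pa c \<and> p < k}"

definition factors_with :: "nat \<Rightarrow> (nat enode \<times> nat set) set" where
  "factors_with k =
     insert (Leaf k, insert k (pa k)) ((\<lambda>x. (Elim x, pa x)) ` {x. x < k \<and> k \<in> pa x})"

lemma mem_factors_after [simp]:
  "(Leaf x, s) \<in> factors_after k \<longleftrightarrow> s = insert x (pa x) \<and> k \<le> x \<and> x < n"
  "(Elim x, s) \<in> factors_after k \<longleftrightarrow> s = pa x \<and> x < k \<and> (\<forall>p\<in>pa x. k \<le> p)"
  unfolding factors_after_def by blast+

lemma mem_factors_with [simp]: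
  "(Leaf x, s) \<in> factors_with k \<longleftrightarrow> x = k \<and> s = insert k (pa k)"
  "(Elim x, s) \<in> factors_with k \<longleftrightarrow> s = pa x \<and> x < k \<and> k \<in> pa x"
  unfolding factors_with_def by blast+

lemma mem_edges_after [simp]:
  "(Leaf x, w) \<in> edges_after k \<longleftrightarrow> x < k \<and> w = Elim x"
  "(Elim c, w) \<in> edges_after k \<longleftrightarrow> c < k \<and> (\<exists>p\<in>pa c. p < k \<and> w = Elim p)"
  "(u, Leaf z) \<notin> edges_after k"
  unfolding edges_after_def by blast+

lemma factors_after_0: "factors_after 0 = init_factors {0..<n} pa"
  unfolding factors_after_def init_factors_def by auto

lemma edges_after_0: "edges_after 0 = {}"
  unfolding edges_after_def by auto

context
  fixes k assumes k: "k < n"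
begin

lemma pa_above: "p \<in> pa k \<Longrightarrow> k < p"
  using k pa_greater by blast

lemma pa_of_child: "x < k \<Longrightarrow> k \<in> pa x \<Longrightarrow> pa x = {k}"
  using k pa_unique[of x k] less_trans by blast

lemma factors_after_with: "{c \<in> factors_after k. k \<in> snd c} = factors_with k"
proof -
  have "(v, s) \<in> {c \<in> factors_after k. k \<in> snd c} \<longleftrightarrow> (v, s) \<in> factors_with k" for v s
  proof (cases v)
    case (Leaf x)
    have "x = k" if "k \<le> x" "x < n" "k \<in> insert x (pa x)"
      using that pa_greater[of x k] by auto
    with Leaf k show ?thesis by auto
  next
    case (Elim x)
    have "\<forall>p\<in>pa x. k \<le> p" if "x < k" "k \<in> pa x"
      using pa_of_child[OF that] by simp
    with Elim show ?thesis by auto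
  qed
  then show ?thesis
    by (intro set_eqI) (metis surj_pair)
qed

lemma scope_factors_with: "(\<Union>c\<in>factors_with k. snd c) - {k} = pa k"
proof -
  have "pa x \<subseteq> {k}" if "x < k" "k \<in> pa x" for x
    using pa_of_child[OF that] by simp
  then have "(\<Union>c\<in>factors_with k. snd c) = insert k (pa k)"
    unfolding factors_with_def by auto
  moreover have "k \<notin> pa k"
    using pa_above by blast
  ultimately show ?thesis
    by simp
qed

lemma factors_after_Suc:
  "factors_after k - factors_with k \<union> {(Elim k, pa k)} = factors_after (Suc k)"
proof -
  have Elim_Suc: "x < Suc k \<and> (\<forall>p\<in>pa x. Suc k \<le> p) \<longleftrightarrow>
      x = k \<or> x < k \<and> (\<forall>p\<in>pa x. k \<le> p) \<and> k \<notin> pa x" for x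
    using pa_above by (auto simp: Suc_le_eq) (metis le_neq_implies_less)
  have "(v, s) \<in> factors_after k - factors_with k \<union> {(Elim k, pa k)} \<longleftrightarrow>
      (v, s) \<in> factors_after (Suc k)" for v s
  proof (cases v)
    case (Leaf x)
    then show ?thesis by (cases "x = k") (auto simp: Suc_le_eq)
  next
    case (Elim x)
    then show ?thesis by (auto simp: Elim_Suc)
  qed
  then show ?thesis
    by (simp add: set_eq_iff)
qed

lemma edges_after_Suc:
  "edges_after k \<union> {(fst c, Elim k) | c. c \<in> factors_with k} = edges_after (Suc k)"
  unfolding edges_after_def factors_with_def by (auto simp: less_Suc_eq dest: pa_above)

lemma elim_step_after:
  "elim_step k (factors_after k, edges_after k) = (factors_after (Suc k), edges_after (Suc k))"
  unfolding elim_step_def Let_def prod.case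
  unfolding factors_after_with scope_factors_with factors_after_Suc edges_after_Suc ..

end

lemma fold_elim_step_upt:
  "k \<le> n \<Longrightarrow>
    fold elim_step [0..<k] (init_factors {0..<n} pa, {}) = (factors_after k, edges_after k)"
  by (induction k) (simp_all add: factors_after_0 edges_after_0 elim_step_after)

lemma elim_edges_upt: "elim_edges {0..<n} pa [0..<n] = edges_after n"
  using fold_elim_step_upt[of n] by (simp add: elim_edges_def)

lemma elim_nodes_upt: "elim_nodes {0..<n} [0..<n] = Leaf ` {0..<n} \<union> Elim ` {0..<n}"
  by (simp add: elim_nodes_def)

lemma internal_nodes_elim:
  "internal_nodes (elim_nodes {0..<n} [0..<n]) (edges_after n) = Elim ` {0..<n}"
  unfolding elim_nodes_upt internal_nodes_def by auto (use mem_edges_after(1) in blast)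

lemma digraph_iso_internal_elim:
  "digraph_iso (internal_nodes (elim_nodes {0..<n} [0..<n]) (elim_edges {0..<n} pa [0..<n]))
     (internal_edges (elim_nodes {0..<n} [0..<n]) (elim_edges {0..<n} pa [0..<n]))
     {0..<n} {(c, p). c < n \<and> p \<in> pa c}"
proof -
  have edges: "internal_edges (elim_nodes {0..<n} [0..<n]) (edges_after n) =
      {(u, v) \<in> Elim ` {0..<n} \<times> Elim ` {0..<n}.
        (enode_var u, enode_var v) \<in> {(c, p). c < n \<and> p \<in> pa c}}"
    unfolding internal_edges_def internal_nodes_elim by (auto dest: pa_greater)
  have "{(c, p). c < n \<and> p \<in> pa c} \<subseteq> {0..<n} \<times> {0..<n}"
    by (auto dest: pa_greater)
  then show ?thesis
    unfolding elim_edges_upt internal_nodes_elim edges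
    by (rule digraph_iso_pullback[OF bij_betw_enode_var_Elim])
qed

end

locale ordered_tree_net = ordered_forest_net +
  fixes root :: nat
  assumes root_less: "root < n" and pa_root: "pa root = {}"
    and parentless_root: "i < n \<Longrightarrow> pa i = {} \<Longrightarrow> i = root"
begin

lemma Elim_reaches_root: "i < n \<Longrightarrow> (Elim i, Elim root) \<in> (edges_after n)\<^sup>*"
proof (induction "n - i" arbitrary: i rule: less_induct)
  case less
  show ?case
  proof (cases "pa i = {}")
    case True
    then show ?thesis
      using parentless_root less.prems by simp
  next
    case False
    then obtain p where p: "p \<in> pa i"
      by blast
    with less.prems have "i < p" "p < n"
      using pa_greater by blast+
    with less.hyps have "(Elim p, Elim root) \<in> (edges_after n)\<^sup>*"
      by simp
    moreover have "(Elim i, Elim p) \<in> edges_after n"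
      using p \<open>p < n\<close> less.prems by simp
    ultimately show ?thesis
      by (rule converse_rtrancl_into_rtrancl[rotated])
  qed
qed

lemma reaches_root:
  assumes "v \<in> Leaf ` {0..<n} \<union> Elim ` {0..<n}"
  shows "(v, Elim root) \<in> (edges_after n)\<^sup>*"
proof -
  obtain x where "x < n" and "v = Leaf x \<or> v = Elim x"
    using assms by auto
  moreover have "(Leaf x, Elim x) \<in> edges_after n" if "x < n" for x
    using that by simp
  ultimately show ?thesis
    using Elim_reaches_root converse_rtrancl_into_rtrancl by metis
qed

lemma ex1_out_edge:
  assumes "v \<in> Leaf ` {0..<n} \<union> Elim ` {0..<n}" and "v \<noteq> Elim root"
  shows "\<exists>!w. (v, w) \<in> edges_after n"
proof (cases v)
  case (Leaf x)
  with assms show ?thesis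
    by auto
next
  case (Elim c)
  with assms have "c < n" "c \<noteq> root"
    by auto
  then obtain p where p: "p \<in> pa c"
    using parentless_root by blast
  show ?thesis
    unfolding Elim
  proof (rule ex1I)
    show "(Elim c, Elim p) \<in> edges_after n"
      using p pa_greater[OF \<open>c < n\<close> p] \<open>c < n\<close> by simp
  next
    fix w assume "(Elim c, w) \<in> edges_after n"
    then obtain q where "q \<in> pa c" "w = Elim q"
      by auto
    then show "w = Elim p"
      using pa_unique[OF \<open>c < n\<close> p] by simp
  qed
qed

lemma rooted_tree_elim: "rooted_tree (elim_nodes {0..<n} [0..<n]) (elim_edges {0..<n} pa [0..<n])"
proof -
  let ?N = "Leaf ` {0..<n} \<union> Elim ` {0..<n}"
  have "finite ?N" "Elim root \<in> ?N"
    using root_less by auto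
  moreover have "edges_after n \<subseteq> ?N \<times> ?N"
    unfolding edges_after_def by auto
  moreover have "\<forall>v. (Elim root, v) \<notin> edges_after n"
    using pa_root by simp
  ultimately show ?thesis
    unfolding elim_nodes_upt elim_edges_upt rooted_tree_def
    using ex1_out_edge reaches_root by (intro conjI bexI[of _ "Elim root"] ballI impI)
qed

end

lemma ordered_tree_net_enumeration:
  assumes tree: "rooted_tree V E" and "distinct \<tau>" and "set \<tau> = V"
    and topological: "\<And>i j. i < length \<tau> \<Longrightarrow> j < length \<tau> \<Longrightarrow> (\<tau> ! i, \<tau> ! j) \<in> E \<Longrightarrow> i < j"
  obtains root
  where "ordered_tree_net (length \<tau>) (\<lambda>i. {j. j < length \<tau> \<and> (\<tau> ! i, \<tau> ! j) \<in> E}) root"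
proof -
  let ?n = "length \<tau>" and ?pa = "\<lambda>i. {j. j < length \<tau> \<and> (\<tau> ! i, \<tau> ! j) \<in> E}"
  from tree obtain r where "E \<subseteq> V \<times> V" "r \<in> V" and sink: "\<forall>v. (r, v) \<notin> E"
    and parent: "\<forall>v\<in>V. v \<noteq> r \<longrightarrow> (\<exists>!w. (v, w) \<in> E)"
    unfolding rooted_tree_def by blast
  obtain root where "root < ?n" "\<tau> ! root = r"
    using \<open>r \<in> V\<close> \<open>set \<tau> = V\<close> by (metis in_set_conv_nth)
  have nth_inj: "\<tau> ! i = \<tau> ! j \<longleftrightarrow> i = j" if "i < ?n" "j < ?n" for i j
    using that \<open>distinct \<tau>\<close> by (simp add: nth_eq_iff_index_eq)
  have forest: "ordered_forest_net ?n ?pa"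
  proof
    show "i < j \<and> j < ?n" if "i < ?n" "j \<in> ?pa i" for i j
      using that topological[of i j] by simp
    show "j = j'" if "i < ?n" "j \<in> ?pa i" "j' \<in> ?pa i" for i j j'
    proof -
      have "\<tau> ! j = \<tau> ! j'"
        using that single_valuedD[OF rooted_tree_single_valued[OF tree]] by auto
      with that nth_inj show ?thesis
        by auto
    qed
  qed
  have "?pa root = {}"
    using sink \<open>\<tau> ! root = r\<close> by simp
  moreover have "i = root" if "i < ?n" "?pa i = {}" for i
  proof (rule ccontr)
    assume "i \<noteq> root"
    then have "\<tau> ! i \<in> V" "\<tau> ! i \<noteq> r"
      using that(1) nth_inj \<open>root < ?n\<close> \<open>\<tau> ! root = r\<close> \<open>set \<tau> = V\<close> by auto
    then obtain w where "(\<tau> ! i, w) \<in> E"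
      using parent by blast
    moreover from this obtain j where "j < ?n" "w = \<tau> ! j"
      using \<open>E \<subseteq> V \<times> V\<close> \<open>set \<tau> = V\<close> by (metis SigmaD2 in_set_conv_nth subsetD)
    ultimately show False
      using that(2) by auto
  qed
  ultimately have "ordered_tree_net_axioms ?n ?pa root"
    unfolding ordered_tree_net_axioms_def using \<open>root < ?n\<close> by blast
  with forest show ?thesis
    by (intro that ordered_tree_net.intro)
qed

theorem rooted_tree_is_internal_elimination_tree:
  fixes V :: "'n set" and E :: "('n \<times> 'n) set"
  assumes "rooted_tree V E"
  shows "\<exists>(X :: nat set) pa \<sigma>. bayes_net X pa \<and> elim_order X \<sigma> \<and>
           rooted_tree (elim_nodes X \<sigma>) (elim_edges X pa \<sigma>) \<and>
           digraph_iso (internal_nodes (elim_nodes X \<sigma>) (elim_edges X pa \<sigma>))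
                       (internal_edges (elim_nodes X \<sigma>) (elim_edges X pa \<sigma>)) V E"
proof -
  have "finite V" "E \<subseteq> V \<times> V"
    using assms unfolding rooted_tree_def by auto
  then obtain \<tau> where \<tau>: "distinct \<tau>" "set \<tau> = V"
    and topological: "\<And>i j. i < length \<tau> \<Longrightarrow> j < length \<tau> \<Longrightarrow> (\<tau> ! i, \<tau> ! j) \<in> E \<Longrightarrow> i < j"
    using finite_acyclic_topological_list[OF \<open>finite V\<close> rooted_tree_acyclic[OF assms]] by blast
  define n where "n = length \<tau>"
  define pa where "pa i = {j. j < n \<and> (\<tau> ! i, \<tau> ! j) \<in> E}" for i
  obtain root where "ordered_tree_net n pa root"
    using ordered_tree_net_enumeration[OF assms \<tau> topological] unfolding n_def pa_def .
  then interpret ordered_tree_net n pa root .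
  have "bij_betw (nth \<tau>) {0..<n} V"
    using \<tau> unfolding n_def by (intro bij_betw_nth) auto
  then have "digraph_iso {0..<n} {(i, j) \<in> {0..<n} \<times> {0..<n}. (\<tau> ! i, \<tau> ! j) \<in> E} V E"
    using \<open>E \<subseteq> V \<times> V\<close> by (rule digraph_iso_pullback)
  moreover have "{(i, j) \<in> {0..<n} \<times> {0..<n}. (\<tau> ! i, \<tau> ! j) \<in> E} = {(c, p). c < n \<and> p \<in> pa c}"
    unfolding pa_def by auto
  ultimately have "digraph_iso {0..<n} {(c, p). c < n \<and> p \<in> pa c} V E"
    by simp
  then have "digraph_iso
      (internal_nodes (elim_nodes {0..<n} [0..<n]) (elim_edges {0..<n} pa [0..<n]))
      (internal_edges (elim_nodes {0..<n} [0..<n]) (elim_edges {0..<n} pa [0..<n])) V E"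
    by (rule digraph_iso_trans[OF digraph_iso_internal_elim])
  moreover have "elim_order {0..<n} [0..<n]"
    by (simp add: elim_order_def)
  ultimately show ?thesis
    using bayes_net_upt rooted_tree_elim by (intro exI conjI)
qed

theorem lemma8:
  fixes V :: "'n set" and E :: "('n \<times> 'n) set"
  assumes "rooted_tree V E"
    and "E \<noteq> {}"
  shows "\<exists>(X :: nat set) pa \<sigma>. bayes_net X pa \<and> elim_order X \<sigma> \<and>
           rooted_tree (elim_nodes X \<sigma>) (elim_edges X pa \<sigma>) \<and>
           digraph_iso (internal_nodes (elim_nodes X \<sigma>) (elim_edges X pa \<sigma>))
                       (internal_edges (elim_nodes X \<sigma>) (elim_edges X pa \<sigma>))
                       (internal_nodes V E) (internal_edges V E)"
  using rooted_tree_is_internal_elimination_tree[OF rooted_tree_internal[OF assms]] .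

end
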